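(* Let $d$ be an even positive integer and $s$ a positive integer with $2s\leqslant d$. Let $\varepsilon,\gamma\in I^s\setminus\{\alpha,\omega\}$, $i=t(\varepsilon)$, $j=t(\gamma)$, and suppose $\varepsilon_s=0$. If either (1) $\varepsilon_s=\gamma_s=0$, or (2) $\gamma_s=1$ and $j\geqslant i$, then for every $x\in B_\varepsilon$ and $y\in B_\gamma$ we have $\langle\varepsilon,\gamma\rangle\leqslant\langle x,y\rangle$.
   Context: Let $I=\{0,1\}$; for binary vectors $x,y$ of the same length, $|x|=\sum_i x_i$ and $\langle x,y\rangle=\sum_i x_iy_i$. Let $\alpha=(0,\ldots,0)$, $\omega=(1,\ldots,1)\in I^s$. For $\varepsilon\in I^s\setminus\{\alpha,\omega\}$ let $t(\varepsilon)$ be the unique index $i$ with $\varepsilon_i\neq\varepsilon_{i+1}=\cdots=\varepsilon_s$, and $A_\varepsilon=\{\varepsilon_1\}\times\cdots\times\{\varepsilon_i\}\times I^{s-1-i}\subseteq I^{s-1}$ with $i=t(\varepsilon)$. Define subsets of $I^{d-s}$: $X_0=\{x\colon |x|\leqslant \frac d2-s\}$; $X_k=\{x\colon |x|=\frac d2-s+k\}$ for $0<k<s$; $X_s=\{x\colon |x|\geqslant \frac d2\}$. Writing $x\in I^{d-s}$ as $x=(x',x'')\in I^{d-2s+1}\times I^{s-1}$, for $\varepsilon\in I^s\setminus\{\alpha,\omega\}$ set $B_\varepsilon=X_{|\varepsilon|}\cap(I^{d-2s+1}\times A_\varepsilon)$. *)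

theory Defs
  imports Main
begin

text \<open>Binary vectors in I^n are represented as nat lists of length n with entries in {0,1}.
  Coordinates are 1-based as in the paper: bit v i = v_i.\<close>

definition cube :: "nat \<Rightarrow> nat list set" where
  "cube n = {v. length v = n \<and> set v \<subseteq> {0, 1}}"

definition bit :: "nat list \<Rightarrow> nat \<Rightarrow> nat" where
  "bit v i = v ! (i - 1)"

definition weight :: "nat list \<Rightarrow> nat" where
  "weight v = sum_list v"

definition ip :: "nat list \<Rightarrow> nat list \<Rightarrow> nat" where
  "ip v w = (\<Sum>i = 1..length v. bit v i * bit w i)"

definition alpha :: "nat \<Rightarrow> nat list" where
  "alpha s = replicate s 0"

definition omega :: "nat \<Rightarrow> nat list" where
  "omega s = replicate s 1"

definition tidx :: "nat list \<Rightarrow> nat" where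
  "tidx eps = (THE i. 1 \<le> i \<and> i < length eps \<and> bit eps i \<noteq> bit eps (i + 1) \<and>
      (\<forall>k. i + 1 \<le> k \<and> k \<le> length eps \<longrightarrow> bit eps k = bit eps (i + 1)))"

definition Aset :: "nat list \<Rightarrow> nat list set" where
  "Aset eps = {z \<in> cube (length eps - 1). \<forall>k. 1 \<le> k \<and> k \<le> tidx eps \<longrightarrow> bit z k = bit eps k}"

definition Xset :: "nat \<Rightarrow> nat \<Rightarrow> nat \<Rightarrow> nat list set" where
  "Xset d s k =
     (if k = 0 then {x \<in> cube (d - s). weight x \<le> d div 2 - s}
      else if k < s then {x \<in> cube (d - s). weight x = d div 2 - s + k}
      else {x \<in> cube (d - s). weight x \<ge> d div 2})"

text \<open>B_eps = X_|eps| \<inter> (I^(d-2s+1) x A_eps), writing x = (x', x'').\<close>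
definition Bset :: "nat \<Rightarrow> nat list \<Rightarrow> nat list set" where
  "Bset d eps = {x \<in> Xset d (length eps) (weight eps).
      take (d - 2 * length eps + 1) x \<in> cube (d - 2 * length eps + 1) \<and>
      drop (d - 2 * length eps + 1) x \<in> Aset eps}"

end

theory Submission
  imports Defs
begin

text \<open>Let \<open>r = min (t \<epsilon>) (t \<gamma>)\<close>. Beyond position \<open>r\<close> the product \<open>\<epsilon>\<^sub>k \<gamma>\<^sub>k\<close> vanishes:
  past \<open>t \<epsilon>\<close> the vector \<open>\<epsilon>\<close> is constantly \<open>\<epsilon>\<^sub>s = 0\<close>, and past \<open>t \<gamma>\<close> but not past \<open>t \<epsilon>\<close>
  (impossible in case (2)) the vector \<open>\<gamma>\<close> is constantly \<open>\<gamma>\<^sub>s = 0\<close>. So \<open>\<langle>\<epsilon>,\<gamma>\<rangle>\<close> only sees the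
  first \<open>r\<close> coordinates, on which every \<open>x \<in> B\<^sub>\<epsilon>\<close>, \<open>y \<in> B\<^sub>\<gamma>\<close> copy \<open>\<epsilon>\<close>, \<open>\<gamma>\<close> in the block
  \<open>x''\<close>; hence \<open>\<langle>\<epsilon>,\<gamma>\<rangle>\<close> is a partial sum of the nonnegative terms of \<open>\<langle>x,y\<rangle>\<close>.\<close>

lemma tidx_eqI:
  assumes "1 \<le> i" "i < length v" "bit v i \<noteq> bit v (length v)"
    and "\<forall>k. i < k \<and> k \<le> length v \<longrightarrow> bit v k = bit v (length v)"
  shows "tidx v = i"
  unfolding tidx_def
proof (rule the_equality)
  have next_eq_last: "bit v (i + 1) = bit v (length v)"
    using assms(2) assms(4)[rule_format, of "i + 1"] by simp
  show "1 \<le> i \<and> i < length v \<and> bit v i \<noteq> bit v (i + 1) \<and>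
      (\<forall>k. i + 1 \<le> k \<and> k \<le> length v \<longrightarrow> bit v k = bit v (i + 1))"
  proof (intro conjI allI impI)
    show "bit v i \<noteq> bit v (i + 1)"
      using assms(3) next_eq_last by simp
    fix k assume "i + 1 \<le> k \<and> k \<le> length v"
    then show "bit v k = bit v (i + 1)"
      using assms(4)[rule_format, of k] next_eq_last by simp
  qed (use assms(1,2) in auto)
  fix j
  assume "1 \<le> j \<and> j < length v \<and> bit v j \<noteq> bit v (j + 1) \<and>
      (\<forall>k. j + 1 \<le> k \<and> k \<le> length v \<longrightarrow> bit v k = bit v (j + 1))"
  then have j: "j < length v" "bit v j \<noteq> bit v (j + 1)"
    and after_j: "\<And>k. j + 1 \<le> k \<Longrightarrow> k \<le> length v \<Longrightarrow> bit v k = bit v (j + 1)"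
    by blast+
  show "j = i"
  proof (rule linorder_cases)
    assume "j < i"
    then have "bit v i = bit v (i + 1)"
      using after_j[of i] after_j[of "i + 1"] assms(2) by simp
    with assms(3) next_eq_last show ?thesis
      by simp
  next
    assume "i < j"
    then have "bit v j = bit v (j + 1)"
      using assms(4)[rule_format, of j] assms(4)[rule_format, of "j + 1"] j(1) by simp
    with j(2) show ?thesis
      by simp
  qed
qed

lemma bit_ne_last_if_nonconstant:
  assumes "v \<in> cube s - {alpha s, omega s}"
  shows "\<exists>k\<in>{1..s}. bit v k \<noteq> bit v s"
proof (rule ccontr)
  assume "\<not> ?thesis"
  then have const: "bit v k = bit v s" if "k \<in> {1..s}" for k
    using that by blast
  have len: "length v = s" and bits: "set v \<subseteq> {0, 1}"
    using assms by (auto simp: cube_def)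
  have const_v: "v = replicate s (bit v s)"
  proof (rule nth_equalityI)
    fix k assume "k < length v"
    then show "v ! k = replicate s (bit v s) ! k"
      using const[of "k + 1"] len by (simp add: bit_def)
  qed (simp add: len)
  have "s > 0"
    using assms by (auto simp: alpha_def cube_def)
  then have "bit v s \<in> set v"
    using len by (simp add: bit_def)
  then have "bit v s = 0 \<or> bit v s = 1"
    using bits by blast
  then have "v = alpha s \<or> v = omega s"
    using const_v unfolding alpha_def omega_def by metis
  with assms show False
    by blast
qed

lemma tidx_last_change:
  assumes "v \<in> cube s - {alpha s, omega s}"
  shows "tidx v < s" and "\<And>k. tidx v < k \<Longrightarrow> k \<le> s \<Longrightarrow> bit v k = bit v s"
proof -
  define D where "D = {k \<in> {1..s}. bit v k \<noteq> bit v s}"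
  define i where "i = Max D"
  have fin: "finite D" and "D \<noteq> {}"
    using bit_ne_last_if_nonconstant[OF assms] by (auto simp: D_def)
  then have "i \<in> D"
    unfolding i_def by (rule Max_in)
  then have i: "1 \<le> i" "i \<le> s" "bit v i \<noteq> bit v s"
    by (simp_all add: D_def)
  then have "i < s"
    using le_neq_implies_less by blast
  have above: "bit v k = bit v s" if "i < k" "k \<le> s" for k
  proof (rule ccontr)
    assume "bit v k \<noteq> bit v s"
    then have "k \<in> D"
      using that i(1) by (simp add: D_def)
    then have "k \<le> i"
      unfolding i_def by (rule Max_ge[OF fin])
    with that(1) show False
      by simp
  qed
  have len: "length v = s"
    using assms by (simp add: cube_def)
  have "tidx v = i"
  proof (rule tidx_eqI)
    show "\<forall>k. i < k \<and> k \<le> length v \<longrightarrow> bit v k = bit v (length v)"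
      unfolding len using above by blast
  qed (use i \<open>i < s\<close> len in auto)
  with \<open>i < s\<close> show "tidx v < s"
    by simp
  show "bit v k = bit v s" if "tidx v < k" "k \<le> s" for k
    using above[of k] that \<open>tidx v = i\<close> by simp
qed

lemma ip_eq_prefix_sum:
  assumes "r \<le> length v"
    and "\<forall>k. r < k \<and> k \<le> length v \<longrightarrow> bit v k * bit w k = 0"
  shows "ip v w = (\<Sum>k = 1..r. bit v k * bit w k)"
  unfolding ip_def
proof (rule sum.mono_neutral_right)
  show "\<forall>k \<in> {1..length v} - {1..r}. bit v k * bit w k = 0"
  proof
    fix k assume "k \<in> {1..length v} - {1..r}"
    then have "r < k \<and> k \<le> length v" by auto
    with assms(2) show "bit v k * bit w k = 0" by blast
  qed
qed (use assms(1) in auto)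

lemma shifted_prefix_sum_le_ip:
  assumes "m + r \<le> length x"
  shows "(\<Sum>k = 1..r. bit x (m + k) * bit y (m + k)) \<le> ip x y"
proof -
  have "(\<Sum>k = 1..r. bit x (m + k) * bit y (m + k)) = (\<Sum>k \<in> (+) m ` {1..r}. bit x k * bit y k)"
    by (subst sum.reindex) (auto simp: inj_on_def)
  also have "\<dots> \<le> (\<Sum>k = 1..length x. bit x k * bit y k)"
    by (rule sum_mono2) (use assms in auto)
  finally show ?thesis
    unfolding ip_def .
qed

lemma length_Bset:
  assumes "x \<in> Bset d eps"
  shows "length x = d - length eps"
  using assms by (auto simp: Bset_def Xset_def cube_def split: if_splits)

lemma bit_Bset:
  assumes "x \<in> Bset d eps" "1 \<le> k" "k \<le> tidx eps" "0 < length eps" "2 * length eps \<le> d"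
  shows "bit x (d - 2 * length eps + 1 + k) = bit eps k"
proof -
  let ?m = "d - 2 * length eps + 1"
  have "drop ?m x \<in> Aset eps"
    using assms(1) by (simp add: Bset_def)
  then have "bit (drop ?m x) k = bit eps k"
    using assms(2,3) by (simp add: Aset_def)
  moreover have "?m \<le> length x"
    using assms(4,5) length_Bset[OF assms(1)] by linarith
  ultimately show ?thesis
    using assms(2) by (simp add: bit_def)
qed

lemma bit_mult_eq_0_beyond_tidx:
  assumes "eps \<in> cube s - {alpha s, omega s}" "gam \<in> cube s - {alpha s, omega s}"
    and "bit eps s = 0"
    and "bit gam s = 0 \<or> tidx gam \<ge> tidx eps"
    and "min (tidx eps) (tidx gam) < k" "k \<le> s"
  shows "bit eps k * bit gam k = 0"
proof (cases "tidx eps < k")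
  case True
  then show ?thesis
    using tidx_last_change(2)[OF assms(1) _ assms(6)] assms(3) by simp
next
  case False
  then have "tidx gam < k" "bit gam s = 0"
    using assms(4,5) by auto
  then show ?thesis
    using tidx_last_change(2)[OF assms(2) _ assms(6)] by simp
qed

theorem lemma2:
  fixes d s :: nat and eps gam :: "nat list"
  assumes "even d" and "d > 0" and "s > 0" and "2 * s \<le> d"
    and "eps \<in> cube s - {alpha s, omega s}"
    and "gam \<in> cube s - {alpha s, omega s}"
    and "bit eps s = 0"
    and "(bit eps s = 0 \<and> bit gam s = 0) \<or> (bit gam s = 1 \<and> tidx gam \<ge> tidx eps)"
  shows "\<forall>x \<in> Bset d eps. \<forall>y \<in> Bset d gam. ip eps gam \<le> ip x y"
proof (intro ballI)
  fix x y assume x: "x \<in> Bset d eps" and y: "y \<in> Bset d gam"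
  define r where "r = min (tidx eps) (tidx gam)"
  define m where "m = d - 2 * s + 1"
  have len: "length eps = s" "length gam = s" "length x = d - s"
    using assms(5,6) length_Bset[OF x] by (auto simp: cube_def)
  have "r < s"
    using tidx_last_change(1)[OF assms(5)] by (simp add: r_def min_less_iff_disj)
  have "bit gam s = 0 \<or> tidx gam \<ge> tidx eps"
    using assms(8) by blast
  then have "\<forall>k. r < k \<and> k \<le> length eps \<longrightarrow> bit eps k * bit gam k = 0"
    using bit_mult_eq_0_beyond_tidx[OF assms(5-7)] by (simp add: len r_def)
  then have "ip eps gam = (\<Sum>k = 1..r. bit eps k * bit gam k)"
    using \<open>r < s\<close> by (intro ip_eq_prefix_sum) (simp_all add: len)
  also have "\<dots> = (\<Sum>k = 1..r. bit x (m + k) * bit y (m + k))"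
    using bit_Bset[OF x] bit_Bset[OF y] assms(3,4) by (intro sum.cong) (auto simp: len m_def r_def)
  also have "\<dots> \<le> ip x y"
    using \<open>r < s\<close> assms(4) by (intro shifted_prefix_sum_le_ip) (simp add: len m_def)
  finally show "ip eps gam \<le> ip x y" .
qed

end
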